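(* Let $\widetilde V:[-1,1]\to\mathbb R$ be smooth and $V(\vec n)=\widetilde V(\vec n\cdot e_z)$ on $S^2$. Let $\vec n:[0,T]\to S^2$ be a smooth solution of $$D_t^3\dot{\vec n}+R(D_t\dot{\vec n},\dot{\vec n})\dot{\vec n}+\operatorname{grad}V(\vec n)=0 .$$ Then the quantity $$J_z(t)=\Big\langle \tfrac{d}{dt}\big(D_t\dot{\vec n}(t)\big),X(\vec n(t))\Big\rangle-\Big\langle D_t\dot{\vec n}(t),D_tX(\vec n(t))\Big\rangle$$ is constant in $t$.
   Context: $S^2\subset\mathbb R^3$ is the unit sphere with the round metric $\langle\cdot,\cdot\rangle$ (restriction of the Euclidean inner product), Levi--Civita connection $\nabla$, covariant derivative $D_t$ along curves, and $D_t^3\dot{\vec n}=D_t(D_t(D_t\dot{\vec n}))$. Its curvature tensor is $R(a,b)c=(b\cdot c)a-(a\cdot c)b$ for tangent vectors $a,b,c$. $\operatorname{grad}V$ is the Riemannian gradient of $V$ (equivalently the tangential projection of the Euclidean gradient of any smooth extension). $e_z=(0,0,1)$, $X(\vec n)=e_z\times\vec n$ is the Killing vector field generating rotations about the $z$-axis, and $D_tX(\vec n(t))=\nabla_{\dot{\vec n}}X$. In $J_z$, $\tfrac{d}{dt}(D_t\dot{\vec n})$ is the ordinary derivative in $\mathbb R^3$ of the vector $D_t\dot{\vec n}(t)\in\mathbb R^3$. *)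

theory Defs
  imports "HOL-Analysis.Analysis"
begin

fun iderv :: "real \<Rightarrow> real \<Rightarrow> nat \<Rightarrow> (real \<Rightarrow> 'a::real_normed_vector) \<Rightarrow> real \<Rightarrow> 'a" where
  "iderv a b 0 f = f"
| "iderv a b (Suc k) f = (\<lambda>t. vector_derivative (iderv a b k f) (at t within {a..b}))"

definition smooth_on_interval :: "real \<Rightarrow> real \<Rightarrow> (real \<Rightarrow> 'a::real_normed_vector) \<Rightarrow> bool" where
  "smooth_on_interval a b f \<longleftrightarrow>
     (\<forall>k. \<forall>t\<in>{a..b}. (iderv a b k f has_vector_derivative iderv a b (Suc k) f t) (at t within {a..b}))"

definition ez :: "real^3" where "ez = vector [0, 0, 1]"

definition tproj :: "real^3 \<Rightarrow> real^3 \<Rightarrow> real^3" where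
  "tproj n w = w - (w \<bullet> n) *\<^sub>R n"

definition covD :: "real \<Rightarrow> (real \<Rightarrow> real^3) \<Rightarrow> (real \<Rightarrow> real^3) \<Rightarrow> real \<Rightarrow> real^3" where
  "covD T n W = (\<lambda>t. tproj (n t) (vector_derivative W (at t within {0..T})))"

definition Rcurv :: "real^3 \<Rightarrow> real^3 \<Rightarrow> real^3 \<Rightarrow> real^3" where
  "Rcurv a b c = (b \<bullet> c) *\<^sub>R a - (a \<bullet> c) *\<^sub>R b"

text \<open>Riemannian gradient of V(n) = Vt(n . e_z): tangential projection of the Euclidean
  gradient Vt'(x . e_z) e_z of the extension x |-> Vt(x . e_z); the derivative of Vt is
  taken within [-1,1].\<close>
definition gradV :: "(real \<Rightarrow> real) \<Rightarrow> real^3 \<Rightarrow> real^3" where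
  "gradV Vt n = tproj n (vector_derivative Vt (at (n \<bullet> ez) within {-1..1}) *\<^sub>R ez)"

text \<open>Killing field generating rotations about the z-axis.\<close>
definition Xkill :: "real^3 \<Rightarrow> real^3" where
  "Xkill n = cross3 ez n"

definition Jz :: "real \<Rightarrow> (real \<Rightarrow> real^3) \<Rightarrow> real \<Rightarrow> real" where
  "Jz T n t =
     (let nd = iderv 0 T 1 n; Dn = covD T n nd in
      vector_derivative Dn (at t within {0..T}) \<bullet> Xkill (n t)
      - Dn t \<bullet> covD T n (\<lambda>s. Xkill (n s)) t)"

end

theory Submission
  imports Defs
begin

(* Along the curve, the covariant derivative of a tangent field W is W' + <W, n'> n (ambient
   derivative W'). Hence A = D_t n' = n'' + |n'|^2 n, and since A and X are tangent,
   J_z = <A', X> - <A, X'> with X' = e_z x n', so that J_z' = <A'', X> - <A, e_z x n''>.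
   Pairing the equation with X kills grad V, which is orthogonal to X because V is invariant under
   rotations about e_z; expanding D_t(D_t A) and the curvature term then leaves
   <A'', X> = -|n'|^2 <A, X>. On the other hand <A, e_z x n''> = |n'|^2 <n, e_z x n''>
   = -|n'|^2 <n'', X> = -|n'|^2 <A, X>, so J_z' = 0. *)

lemma has_vector_derivative_inner:
  fixes f g :: "real \<Rightarrow> 'a::real_inner"
  assumes "(f has_vector_derivative f') (at x within s)" and "(g has_vector_derivative g') (at x within s)"
  shows "((\<lambda>x. f x \<bullet> g x) has_vector_derivative f' \<bullet> g x + f x \<bullet> g') (at x within s)"
  using bounded_bilinear.has_vector_derivative[OF bounded_bilinear_inner assms] by (simp add: add.commute)

lemma has_vector_derivative_scaleR_vector:
  fixes g :: "real \<Rightarrow> 'a::real_normed_vector"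
  assumes "(f has_vector_derivative f') (at x within s)" and "(g has_vector_derivative g') (at x within s)"
  shows "((\<lambda>x. f x *\<^sub>R g x) has_vector_derivative f' *\<^sub>R g x + f x *\<^sub>R g') (at x within s)"
  using bounded_bilinear.has_vector_derivative[OF bounded_bilinear_scaleR assms] by (simp add: add.commute)

lemma has_vector_derivative_cross3_right:
  assumes "(g has_vector_derivative g') F"
  shows "((\<lambda>x. cross3 c (g x)) has_vector_derivative cross3 c g') F"
proof -
  have "bounded_linear (cross3 c)"
    using bilinear_cross by (simp add: bilinear_def linear_conv_bounded_linear)
  then show ?thesis
    using assms by (rule bounded_linear.has_vector_derivative)
qed

lemma has_vector_derivative_eq_0_if_constant_on:
  assumes "a < b" and "t \<in> {a..b}" and "(f has_vector_derivative f') (at t within {a..b})"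
    and "\<And>s. s \<in> {a..b} \<Longrightarrow> f s = c"
  shows "f' = 0"
proof -
  have "(f has_vector_derivative 0) (at t within {a..b})"
    using assms(2,4) by (rule has_vector_derivative_transform[where f = "\<lambda>_. c"]) auto
  with assms(1-3) show ?thesis
    using vector_derivative_unique_within_closed_interval[of a b t f f' 0] by simp
qed

lemma inner_tproj_left: "v \<bullet> n = 0 \<Longrightarrow> tproj n w \<bullet> v = w \<bullet> v"
  by (simp add: tproj_def inner_diff_left inner_commute[of n v])

lemma tproj_inner_self: "norm n = 1 \<Longrightarrow> tproj n w \<bullet> n = 0"
  by (simp add: tproj_def inner_diff_left dot_square_norm)

lemma Xkill_inner_self: "Xkill n \<bullet> n = 0" "n \<bullet> Xkill n = 0"
  by (simp_all add: Xkill_def dot_cross_self)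

lemma inner_cross3_swap: "a \<bullet> cross3 c b = - (b \<bullet> cross3 c a)"
  by (simp add: cross3_simps)

lemma gradV_inner_Xkill: "gradV Vt n \<bullet> Xkill n = 0"
  by (simp add: gradV_def Xkill_def inner_tproj_left dot_cross_self)

locale sphere_curve =
  fixes T :: real and n :: "real \<Rightarrow> real^3"
  assumes T_pos: "0 < T"
    and smooth: "smooth_on_interval 0 T n"
    and unit: "\<And>t. t \<in> {0..T} \<Longrightarrow> norm (n t) = 1"
begin

(* keeps der 1 from being rewritten to der (Suc 0), which would no longer match Jz and the equation *)
declare One_nat_def [simp del]

abbreviation der :: "nat \<Rightarrow> real \<Rightarrow> real^3" where
  "der k \<equiv> iderv 0 T k n"

lemma has_vector_derivative_der:
  "t \<in> {0..T} \<Longrightarrow> (der k has_vector_derivative der (Suc k) t) (at t within {0..T})"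
  using smooth unfolding smooth_on_interval_def by blast

lemma has_vector_derivative_der_numeral:
  assumes "t \<in> {0..T}"
  shows "(n has_vector_derivative der 1 t) (at t within {0..T})"
    and "(der 1 has_vector_derivative der 2 t) (at t within {0..T})"
    and "(der 2 has_vector_derivative der 3 t) (at t within {0..T})"
  by (metis has_vector_derivative_der[OF assms] iderv.simps(1) One_nat_def Suc_1 numeral_3_eq_3)+

lemmas vector_derivative_eq = vector_derivative_within_closed_interval[OF T_pos]

definition tangent_field :: "(real \<Rightarrow> real^3) \<Rightarrow> bool" where
  "tangent_field W \<longleftrightarrow> (\<forall>t\<in>{0..T}. W t \<bullet> n t = 0)"

lemma tangent_field_covD: "tangent_field (covD T n W)"
  by (simp add: tangent_field_def covD_def tproj_inner_self unit)

lemma tangent_field_velocity: "tangent_field (der 1)"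
  unfolding tangent_field_def
proof
  fix t assume t: "t \<in> {0..T}"
  have "((\<lambda>s. n s \<bullet> n s) has_vector_derivative der 1 t \<bullet> n t + n t \<bullet> der 1 t) (at t within {0..T})"
    using has_vector_derivative_der_numeral(1)[OF t] by (intro has_vector_derivative_inner)
  then have "der 1 t \<bullet> n t + n t \<bullet> der 1 t = 0"
    by (rule has_vector_derivative_eq_0_if_constant_on[OF T_pos t]) (simp add: unit dot_square_norm)
  then show "der 1 t \<bullet> n t = 0"
    by (simp add: inner_commute)
qed

lemma covD_inner_tangent:
  assumes "t \<in> {0..T}" and "(W has_vector_derivative W') (at t within {0..T})" and "v \<bullet> n t = 0"
  shows "covD T n W t \<bullet> v = W' \<bullet> v"
  using assms by (simp add: covD_def vector_derivative_eq inner_tproj_left)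

lemma covD_tangent_field:
  assumes "tangent_field W" and t: "t \<in> {0..T}"
    and W': "(W has_vector_derivative W') (at t within {0..T})"
  shows "covD T n W t = W' + (W t \<bullet> der 1 t) *\<^sub>R n t"
proof -
  have "((\<lambda>s. W s \<bullet> n s) has_vector_derivative W' \<bullet> n t + W t \<bullet> der 1 t) (at t within {0..T})"
    using W' has_vector_derivative_der_numeral(1)[OF t] by (rule has_vector_derivative_inner)
  then have "W' \<bullet> n t + W t \<bullet> der 1 t = 0"
    by (rule has_vector_derivative_eq_0_if_constant_on[OF T_pos t])
      (use \<open>tangent_field W\<close> in \<open>simp add: tangent_field_def\<close>)
  then have "W' \<bullet> n t = - (W t \<bullet> der 1 t)"
    by linarith
  then show ?thesis
    using t W' by (simp add: covD_def vector_derivative_eq tproj_def)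
qed

lemma has_vector_derivative_Xkill:
  "t \<in> {0..T} \<Longrightarrow> ((\<lambda>s. Xkill (n s)) has_vector_derivative cross3 ez (der 1 t)) (at t within {0..T})"
  unfolding Xkill_def by (intro has_vector_derivative_cross3_right has_vector_derivative_der_numeral)

definition acc :: "real \<Rightarrow> real^3" where
  "acc t = der 2 t + (der 1 t \<bullet> der 1 t) *\<^sub>R n t"

definition acc' :: "real \<Rightarrow> real^3" where
  "acc' t = der 3 t + (2 * (der 1 t \<bullet> der 2 t)) *\<^sub>R n t + (der 1 t \<bullet> der 1 t) *\<^sub>R der 1 t"

(* only the X-component of acc'' matters, and the equation determines it *)
definition acc'' :: "real \<Rightarrow> real^3" where
  "acc'' t = vector_derivative acc' (at t within {0..T})"

definition jerk :: "real \<Rightarrow> real^3" where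
  "jerk t = acc' t + (acc t \<bullet> der 1 t) *\<^sub>R n t"

lemma covD_velocity: "t \<in> {0..T} \<Longrightarrow> covD T n (der 1) t = acc t"
  using covD_tangent_field[OF tangent_field_velocity _ has_vector_derivative_der_numeral(2)]
  by (simp add: acc_def)

lemma acc_inner_self: "t \<in> {0..T} \<Longrightarrow> acc t \<bullet> n t = 0"
  by (metis covD_velocity tangent_field_covD tangent_field_def)

lemma has_vector_derivative_acc:
  assumes t: "t \<in> {0..T}"
  shows "(acc has_vector_derivative acc' t) (at t within {0..T})"
proof -
  have "((\<lambda>s. der 2 s + (der 1 s \<bullet> der 1 s) *\<^sub>R n s) has_vector_derivative
      der 3 t + ((der 2 t \<bullet> der 1 t + der 1 t \<bullet> der 2 t) *\<^sub>R n t + (der 1 t \<bullet> der 1 t) *\<^sub>R der 1 t))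
      (at t within {0..T})"
    by (intro has_vector_derivative_add has_vector_derivative_scaleR_vector
        has_vector_derivative_inner has_vector_derivative_der_numeral[OF t])
  moreover have "der 3 t + ((der 2 t \<bullet> der 1 t + der 1 t \<bullet> der 2 t) *\<^sub>R n t
      + (der 1 t \<bullet> der 1 t) *\<^sub>R der 1 t) = acc' t"
    by (simp add: acc'_def inner_commute algebra_simps)
  ultimately show ?thesis
    unfolding acc_def[abs_def] by (rule has_vector_derivative_eq_rhs)
qed

lemma has_vector_derivative_covD_velocity:
  "t \<in> {0..T} \<Longrightarrow> (covD T n (der 1) has_vector_derivative acc' t) (at t within {0..T})"
  by (rule has_vector_derivative_transform[OF _ covD_velocity has_vector_derivative_acc])

lemma has_vector_derivative_acc':
  assumes t: "t \<in> {0..T}"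
  shows "(acc' has_vector_derivative acc'' t) (at t within {0..T})"
proof -
  have "der k differentiable (at t within {0..T})" for k
    using has_vector_derivative_der[OF t] by (rule differentiableI_vector)
  moreover have "n differentiable (at t within {0..T})"
    using has_vector_derivative_der_numeral(1)[OF t] by (rule differentiableI_vector)
  ultimately have "acc' differentiable (at t within {0..T})"
    unfolding acc'_def[abs_def] by simp
  then show ?thesis
    unfolding acc''_def by (simp add: vector_derivative_works[symmetric])
qed

lemma covD_acc: "t \<in> {0..T} \<Longrightarrow> covD T n (covD T n (der 1)) t = jerk t"
  using covD_tangent_field[OF tangent_field_covD _ has_vector_derivative_covD_velocity]
  by (simp add: covD_velocity jerk_def)

lemma has_vector_derivative_jerk:
  assumes t: "t \<in> {0..T}"
  shows "(jerk has_vector_derivative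
    acc'' t + ((acc' t \<bullet> der 1 t + acc t \<bullet> der 2 t) *\<^sub>R n t + (acc t \<bullet> der 1 t) *\<^sub>R der 1 t))
    (at t within {0..T})"
  unfolding jerk_def[abs_def]
  by (intro has_vector_derivative_add has_vector_derivative_scaleR_vector has_vector_derivative_inner
      has_vector_derivative_acc has_vector_derivative_acc' has_vector_derivative_der_numeral t)

lemma covD_jerk_inner_Xkill:
  assumes t: "t \<in> {0..T}"
  shows "covD T n (covD T n (covD T n (der 1))) t \<bullet> Xkill (n t)
    = acc'' t \<bullet> Xkill (n t) + (acc t \<bullet> der 1 t) * (der 1 t \<bullet> Xkill (n t))"
proof -
  have "(covD T n (covD T n (der 1)) has_vector_derivative
    acc'' t + ((acc' t \<bullet> der 1 t + acc t \<bullet> der 2 t) *\<^sub>R n t + (acc t \<bullet> der 1 t) *\<^sub>R der 1 t))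
    (at t within {0..T})"
    using t covD_acc has_vector_derivative_jerk[OF t] by (rule has_vector_derivative_transform)
  from covD_inner_tangent[OF t this Xkill_inner_self(1)] show ?thesis
    by (simp add: inner_add_left Xkill_inner_self)
qed

lemma acc''_inner_Xkill:
  assumes t: "t \<in> {0..T}"
    and eq: "covD T n (covD T n (covD T n (der 1))) t
      + Rcurv (covD T n (der 1) t) (der 1 t) (der 1 t) + gradV Vt (n t) = 0"
  shows "acc'' t \<bullet> Xkill (n t) = - (der 1 t \<bullet> der 1 t) * (acc t \<bullet> Xkill (n t))"
proof -
  from eq have "(covD T n (covD T n (covD T n (der 1))) t
      + Rcurv (acc t) (der 1 t) (der 1 t) + gradV Vt (n t)) \<bullet> Xkill (n t) = 0"
    by (simp only: covD_velocity[OF t] inner_zero_left)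
  then have "covD T n (covD T n (covD T n (der 1))) t \<bullet> Xkill (n t)
      + Rcurv (acc t) (der 1 t) (der 1 t) \<bullet> Xkill (n t) + gradV Vt (n t) \<bullet> Xkill (n t) = 0"
    by (simp only: inner_add_left)
  moreover have "Rcurv (acc t) (der 1 t) (der 1 t) \<bullet> Xkill (n t)
      = (der 1 t \<bullet> der 1 t) * (acc t \<bullet> Xkill (n t)) - (acc t \<bullet> der 1 t) * (der 1 t \<bullet> Xkill (n t))"
    by (simp add: Rcurv_def inner_diff_left)
  ultimately show ?thesis
    using covD_jerk_inner_Xkill[OF t] gradV_inner_Xkill[of Vt "n t"] by linarith
qed

lemma acc_inner_cross3_der2:
  "acc t \<bullet> cross3 ez (der 2 t) = - (der 1 t \<bullet> der 1 t) * (acc t \<bullet> Xkill (n t))"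
  using inner_cross3_swap[of "n t" ez "der 2 t"]
  by (simp add: acc_def Xkill_def inner_add_left dot_cross_self)

definition J :: "real \<Rightarrow> real" where
  "J t = acc' t \<bullet> Xkill (n t) - acc t \<bullet> cross3 ez (der 1 t)"

lemma Jz_eq_J:
  assumes t: "t \<in> {0..T}"
  shows "Jz T n t = J t"
proof -
  have "vector_derivative (covD T n (der 1)) (at t within {0..T}) = acc' t"
    using t has_vector_derivative_covD_velocity[OF t] by (rule vector_derivative_eq)
  moreover have "covD T n (\<lambda>s. Xkill (n s)) t \<bullet> acc t = cross3 ez (der 1 t) \<bullet> acc t"
    using t has_vector_derivative_Xkill[OF t] acc_inner_self[OF t] by (rule covD_inner_tangent)
  ultimately show ?thesis
    unfolding Jz_def Let_def J_def covD_velocity[OF t] by (metis inner_commute)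
qed

lemma has_vector_derivative_J:
  assumes t: "t \<in> {0..T}"
  shows "(J has_vector_derivative acc'' t \<bullet> Xkill (n t) - acc t \<bullet> cross3 ez (der 2 t)) (at t within {0..T})"
proof -
  have "(J has_vector_derivative (acc'' t \<bullet> Xkill (n t) + acc' t \<bullet> cross3 ez (der 1 t))
      - (acc' t \<bullet> cross3 ez (der 1 t) + acc t \<bullet> cross3 ez (der 2 t))) (at t within {0..T})"
    unfolding J_def[abs_def]
    by (intro has_vector_derivative_diff has_vector_derivative_inner has_vector_derivative_cross3_right
        has_vector_derivative_Xkill has_vector_derivative_acc has_vector_derivative_acc'
        has_vector_derivative_der_numeral t)
  then show ?thesis
    by (rule has_vector_derivative_eq_rhs) linarith
qed

lemma J_constant:
  assumes eq: "\<forall>t\<in>{0..T}. covD T n (covD T n (covD T n (der 1))) t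
      + Rcurv (covD T n (der 1) t) (der 1 t) (der 1 t) + gradV Vt (n t) = 0"
    and t: "t \<in> {0..T}"
  shows "J t = J 0"
proof -
  have "(J has_vector_derivative 0) (at s within {0..T})" if s: "s \<in> {0..T}" for s
    using has_vector_derivative_J[OF s]
  proof (rule has_vector_derivative_eq_rhs)
    show "acc'' s \<bullet> Xkill (n s) - acc s \<bullet> cross3 ez (der 2 s) = 0"
      using acc''_inner_Xkill[OF s eq[rule_format, OF s]] acc_inner_cross3_der2[of s] by simp
  qed
  then obtain c where "\<And>s. s \<in> {0..T} \<Longrightarrow> J s = c"
    using has_vector_derivative_zero_constant[OF convex_real_interval(5)] by blast
  then show ?thesis
    using t T_pos by simp
qed

end

theorem mainTheorem7:
  fixes Vt :: "real \<Rightarrow> real" and n :: "real \<Rightarrow> real^3" and T :: real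
  assumes Vsmooth: "smooth_on_interval (-1) 1 Vt"
    and nsmooth: "smooth_on_interval 0 T n"
    and sphere: "\<forall>t\<in>{0..T}. norm (n t) = 1"
    and eq: "\<forall>t\<in>{0..T}.
       (let nd = iderv 0 T 1 n in
        covD T n (covD T n (covD T n nd)) t
        + Rcurv (covD T n nd t) (nd t) (nd t)
        + gradV Vt (n t) = 0)"
  shows "\<forall>t\<in>{0..T}. Jz T n t = Jz T n 0"
proof (cases "0 < T")
  case False
  then have "{0..T} \<subseteq> {0}"
    by auto
  then show ?thesis
    by auto
next
  case True
  then interpret sphere_curve T n
    using nsmooth sphere by unfold_locales auto
  show ?thesis
  proof
    fix t assume t: "t \<in> {0..T}"
    have "J t = J 0"
      using eq t unfolding Let_def by (rule J_constant)
    with t True show "Jz T n t = Jz T n 0"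
      by (simp add: Jz_eq_J)
  qed
qed

end
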